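(* Let $0<q<1$. For every complex number $z$, $$|A_q(z)|\le e^{q|z|/(1-q)},$$ and for every complex number $z\neq 0$, $$|A_q(z)|\le \frac{\left(\frac{|z|}{\sqrt q}\right)^{1/2}\exp\left\{-\frac{\log^2|z|}{4\log q}\right\}}{(q;q)_\infty}.$$
   Context: Notation: $(a;q)_0:=1$, $(a;q)_k:=\prod_{j=0}^{k-1}(1-aq^j)$, $(a;q)_\infty:=\prod_{j=0}^{\infty}(1-aq^j)$. Ramanujan's function is the entire function $A_q(z):=\sum_{k=0}^{\infty}\frac{q^{k^2}}{(q;q)_k}(-z)^k$. Logarithms and powers are principal branches (here only applied to positive reals). *)

theory Defs
  imports "HOL-Analysis.Analysis"
begin

definition qpoch :: "'a::comm_ring_1 \<Rightarrow> 'a \<Rightarrow> nat \<Rightarrow> 'a" where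
  "qpoch a q k = (\<Prod>j<k. (1 - a * q ^ j))"

definition qpoch_inf :: "real \<Rightarrow> real \<Rightarrow> real" where
  "qpoch_inf a q = (\<Prod>j. (1 - a * q ^ j))"

definition ramanujanA :: "real \<Rightarrow> complex \<Rightarrow> complex" where
  "ramanujanA q z = (\<Sum>k. complex_of_real (q ^ (k^2) / qpoch q q k) * (- z) ^ k)"

end

(*
  Both bounds compare the series termwise with a series whose sum is known.
  Since 1 - q^(j+1) >= (j+1) (1 - q) q^j, the coefficient q^(k^2)/(q;q)_k is at most
  (q/(1-q))^k / k!, which gives the exponential bound.  For the second bound, completing
  the square in k shows q^(k^2) r^k <= q^k (r/sqrt q)^(1/2) exp(-log^2 r / (4 log q)),
  and Euler's identity sum_k q^k/(q;q)_k = 1/(q;q)_infinity sums the remaining series.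
*)
theory Submission
  imports Defs
begin

lemma qpoch_0 [simp]: "qpoch a q 0 = 1"
  by (simp add: qpoch_def)

lemma qpoch_Suc: "qpoch a q (Suc k) = qpoch a q k * (1 - a * q ^ k)"
  by (simp add: qpoch_def)

lemma qpoch_pos:
  fixes a q :: real
  assumes "0 \<le> a" "a < 1" "0 \<le> q" "q \<le> 1"
  shows "0 < qpoch a q k"
  unfolding qpoch_def
proof (intro prod_pos)
  fix j
  have "a * q ^ j \<le> a * 1"
    using assms by (intro mult_left_mono power_le_one) auto
  then show "0 < 1 - a * q ^ j"
    using assms by simp
qed

lemma qpoch_nonzero:
  fixes a q :: "'a::idom"
  assumes "\<And>j. a * q ^ j \<noteq> 1"
  shows "qpoch a q k \<noteq> 0"
  using assms by (simp add: qpoch_def)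

lemma one_minus_power_Suc_ge:
  fixes q :: real
  assumes "0 \<le> q" "q \<le> 1"
  shows "(1 - q) * real (Suc k) * q ^ k \<le> 1 - q ^ Suc k"
proof -
  have "1 - q ^ Suc k = (1 - q) * (\<Sum>i<Suc k. q ^ i)"
    by (rule one_diff_power_eq)
  moreover have "(\<Sum>i<Suc k. q ^ k) \<le> (\<Sum>i<Suc k. q ^ i)"
    using assms by (intro sum_mono power_decreasing) auto
  ultimately have "(1 - q) * (\<Sum>i<Suc k. q ^ k) \<le> 1 - q ^ Suc k"
    using assms by (metis diff_ge_0_iff_ge mult_left_mono)
  then show ?thesis
    by (simp add: mult.assoc)
qed

lemma fact_le_qpoch:
  fixes q :: real
  assumes "0 \<le> q" "q < 1"
  shows "q ^ (k\<^sup>2) * (1 - q) ^ k * fact k \<le> q ^ k * qpoch q q k"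
proof (induction k)
  case 0
  then show ?case by simp
next
  case (Suc k)
  have "(Suc k)\<^sup>2 = k\<^sup>2 + (2 * k + 1)"
    by (simp add: power2_eq_square)
  then have square: "q ^ ((Suc k)\<^sup>2) = q ^ (k\<^sup>2) * q ^ (2 * k + 1)"
    by (simp add: power_add)
  have "q ^ (2 * k + 1) * ((1 - q) * real (Suc k)) \<le> q ^ (k + 1) * ((1 - q) * real (Suc k))"
    using assms by (intro mult_right_mono power_decreasing) auto
  also have "\<dots> = q * ((1 - q) * real (Suc k) * q ^ k)"
    by simp
  also have "\<dots> \<le> q * (1 - q ^ Suc k)"
    using one_minus_power_Suc_ge[of q k] assms by (intro mult_left_mono) auto
  finally have step: "q ^ (2 * k + 1) * ((1 - q) * real (Suc k)) \<le> q * (1 - q ^ Suc k)" .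
  have "q ^ ((Suc k)\<^sup>2) * (1 - q) ^ Suc k * fact (Suc k)
      = (q ^ (k\<^sup>2) * (1 - q) ^ k * fact k) * (q ^ (2 * k + 1) * ((1 - q) * real (Suc k)))"
    by (simp add: square algebra_simps)
  also have "\<dots> \<le> (q ^ k * qpoch q q k) * (q * (1 - q ^ Suc k))"
    by (rule mult_mono[OF Suc.IH step]) (use assms qpoch_pos[of q q k] in auto)
  also have "\<dots> = q ^ Suc k * qpoch q q (Suc k)"
    by (simp add: qpoch_Suc algebra_simps)
  finally show ?case .
qed

lemma ramanujanA_coeff_le:
  fixes q :: real
  assumes "0 \<le> q" "q < 1"
  shows "q ^ (k\<^sup>2) / qpoch q q k \<le> (q / (1 - q)) ^ k / fact k"
proof -
  have "0 < qpoch q q k"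
    using assms by (intro qpoch_pos) auto
  then show ?thesis
    using fact_le_qpoch[OF assms, of k] assms
    by (simp add: power_divide divide_simps mult_ac)
qed

lemma gaussian_power_le:
  fixes q r :: real
  assumes "0 < q" "q < 1" "0 < r"
  shows "q ^ (k\<^sup>2) * r ^ k
    \<le> q ^ k * ((r / sqrt q) powr (1/2) * exp (- ((ln r)\<^sup>2) / (4 * ln q)))"
proof -
  define L where "L = ln q"
  define s where "s = ln r"
  have "L < 0"
    using assms unfolding L_def by simp
  have "q ^ (k\<^sup>2) = exp (real (k\<^sup>2) * L)" "r ^ k = exp (real k * s)"
    using assms unfolding L_def s_def exp_of_nat_mult by simp_all
  then have lhs: "q ^ (k\<^sup>2) * r ^ k = exp (real k ^ 2 * L + real k * s)"
    by (simp add: exp_add)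
  have "q ^ k = exp (real k * L)"
    using assms unfolding L_def exp_of_nat_mult by simp
  moreover have "(r / sqrt q) powr (1/2) = exp ((s - L / 2) / 2)"
    using assms unfolding L_def s_def by (simp add: powr_def ln_div ln_sqrt)
  moreover have "real k ^ 2 * L + real k * s \<le> real k * L + ((s - L / 2) / 2 - s\<^sup>2 / (4 * L))"
  proof -
    have "real k * L + ((s - L / 2) / 2 - s\<^sup>2 / (4 * L)) - (real k ^ 2 * L + real k * s)
        = (2 * L * real k - L + s)\<^sup>2 / (- (4 * L))"
      using \<open>L < 0\<close> by (simp add: field_simps power2_eq_square)
    moreover have "0 \<le> (2 * L * real k - L + s)\<^sup>2 / (- (4 * L))"
      using \<open>L < 0\<close> by (intro divide_nonneg_pos) auto
    ultimately show ?thesis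
      by linarith
  qed
  ultimately show ?thesis
    unfolding lhs by (simp add: exp_add[symmetric] s_def L_def)
qed

lemma convergent_prod_qpoch:
  fixes a q :: real
  assumes "\<bar>q\<bar> < 1"
  shows "convergent_prod (\<lambda>j. 1 - a * q ^ j)"
proof -
  have "summable (\<lambda>j. \<bar>a\<bar> * \<bar>q\<bar> ^ j)"
    using assms by (intro summable_mult summable_geometric) simp
  then have "summable (\<lambda>j. norm ((1 - a * q ^ j) - 1))"
    by (simp add: abs_mult power_abs)
  then show ?thesis
    by (intro abs_convergent_prod_imp_convergent_prod summable_imp_abs_convergent_prod)
qed

lemma qpoch_tendsto_qpoch_inf:
  fixes a q :: real
  assumes "\<bar>q\<bar> < 1"
  shows "(\<lambda>n. qpoch a q n) \<longlonglongrightarrow> qpoch_inf a q"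
proof (rule LIMSEQ_imp_Suc)
  show "(\<lambda>n. qpoch a q (Suc n)) \<longlonglongrightarrow> qpoch_inf a q"
    using convergent_prod_LIMSEQ[OF convergent_prod_qpoch[OF assms, of a]]
    by (simp add: qpoch_def qpoch_inf_def lessThan_Suc_atMost)
qed

lemma qpoch_inf_nonzero:
  fixes a q :: real
  assumes "\<bar>q\<bar> < 1" "\<And>j. a * q ^ j \<noteq> 1"
  shows "qpoch_inf a q \<noteq> 0"
  unfolding qpoch_inf_def using assms
  by (intro prodinf_nonzero convergent_prod_qpoch) auto

lemma power_Suc_neq_one:
  fixes q :: real
  assumes "\<bar>q\<bar> < 1"
  shows "q * q ^ j \<noteq> 1"
proof -
  have "\<bar>q ^ Suc j\<bar> = \<bar>q\<bar> ^ Suc j"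
    by (rule power_abs)
  also have "\<dots> < 1"
    using assms by (metis abs_ge_zero power_less_one_iff zero_less_Suc)
  finally show ?thesis
    by auto
qed

lemma sum_power_div_qpoch:
  fixes q :: real
  assumes "\<bar>q\<bar> < 1"
  shows "(\<Sum>k\<le>n. q ^ k / qpoch q q k) = 1 / qpoch q q n"
proof (induction n)
  case 0
  then show ?case by simp
next
  case (Suc n)
  have "qpoch q q n \<noteq> 0"
    using power_Suc_neq_one[OF assms] by (rule qpoch_nonzero)
  moreover have "1 - q * q ^ n \<noteq> 0"
    using power_Suc_neq_one[OF assms, of n] by simp
  ultimately show ?case
    using Suc by (simp add: qpoch_Suc field_simps)
qed

lemma power_div_qpoch_sums:
  fixes q :: real
  assumes "\<bar>q\<bar> < 1"
  shows "(\<lambda>k. q ^ k / qpoch q q k) sums (1 / qpoch_inf q q)"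
  unfolding sums_def LIMSEQ_lessThan_iff_atMost sum_power_div_qpoch[OF assms]
  using power_Suc_neq_one[OF assms]
  by (intro tendsto_divide tendsto_const qpoch_tendsto_qpoch_inf qpoch_inf_nonzero assms)

lemma norm_ramanujanA_le:
  fixes q :: real
  assumes "0 \<le> q" "q < 1"
    and bound: "\<And>k. q ^ (k\<^sup>2) / qpoch q q k * cmod z ^ k \<le> b k"
    and "b sums s"
  shows "cmod (ramanujanA q z) \<le> s"
proof -
  have "cmod (complex_of_real (q ^ (k\<^sup>2) / qpoch q q k) * (- z) ^ k) \<le> b k" for k
    using bound[of k] qpoch_pos[of q q k] assms
    unfolding norm_mult norm_power norm_minus_cancel norm_of_real by simp
  then have "cmod (ramanujanA q z) \<le> suminf b"
    unfolding ramanujanA_def by (rule norm_suminf_le[OF _ sums_summable[OF \<open>b sums s\<close>]])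
  then show ?thesis
    using sums_unique[OF \<open>b sums s\<close>] by simp
qed

lemma norm_ramanujanA_le_exp:
  fixes q :: real
  assumes "0 \<le> q" "q < 1"
  shows "cmod (ramanujanA q z) \<le> exp (q * cmod z / (1 - q))"
proof (rule norm_ramanujanA_le[OF assms])
  show "(\<lambda>k. (q * cmod z / (1 - q)) ^ k / fact k) sums exp (q * cmod z / (1 - q))"
    using exp_converges[of "q * cmod z / (1 - q)"] by (simp add: divide_inverse mult.commute)
  show "q ^ (k\<^sup>2) / qpoch q q k * cmod z ^ k \<le> (q * cmod z / (1 - q)) ^ k / fact k" for k
    using mult_right_mono[OF ramanujanA_coeff_le[OF assms, of k], of "cmod z ^ k"]
    by (simp add: power_divide power_mult_distrib)
qed

lemma norm_ramanujanA_le_gaussian: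
  fixes q :: real
  assumes "0 < q" "q < 1" "z \<noteq> 0"
  shows "cmod (ramanujanA q z)
    \<le> ((cmod z / sqrt q) powr (1/2) * exp (- ((ln (cmod z))\<^sup>2) / (4 * ln q))) / qpoch_inf q q"
proof -
  define B where "B = (cmod z / sqrt q) powr (1/2) * exp (- ((ln (cmod z))\<^sup>2) / (4 * ln q))"
  have "cmod (ramanujanA q z) \<le> B * (1 / qpoch_inf q q)"
  proof (rule norm_ramanujanA_le)
    show "(\<lambda>k. B * (q ^ k / qpoch q q k)) sums (B * (1 / qpoch_inf q q))"
      using assms by (intro sums_mult power_div_qpoch_sums) auto
    show "q ^ (k\<^sup>2) / qpoch q q k * cmod z ^ k \<le> B * (q ^ k / qpoch q q k)" for k
      using gaussian_power_le[of q "cmod z" k] qpoch_pos[of q q k] assms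
      unfolding B_def by (simp add: divide_simps mult.commute)
  qed (use assms in auto)
  then show ?thesis
    unfolding B_def by simp
qed

theorem mainTheorem3:
  fixes q :: real
  assumes "0 < q" "q < 1"
  shows "(\<forall>z::complex. cmod (ramanujanA q z) \<le> exp (q * cmod z / (1 - q)))
       \<and> (\<forall>z::complex. z \<noteq> 0 \<longrightarrow>
            cmod (ramanujanA q z) \<le>
              ((cmod z / sqrt q) powr (1/2) * exp (- ((ln (cmod z)) ^ 2) / (4 * ln q)))
              / qpoch_inf q q)"
  using norm_ramanujanA_le_exp norm_ramanujanA_le_gaussian assms by auto

end
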